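(* Assume the Bateman–Horn Conjecture. Then $\limsup_{n\to\infty} j(a_n)=\infty$; that is, for every positive integer $k$ there are infinitely many $n$ with $j(a_n)\ge k$.
   Context: Let $A$ be the set of positive integers $a$ such that $a^2+1$ is prime, enumerated in increasing order as $A=\{a_1<a_2<\cdots\}$. For $n\ge 2$, $j(a_n)$ denotes the smallest index $i$ with $1\le i\le n-1$ such that $a_n-a_{n-i}\in A$. A finite set of polynomials $f_1,\dots,f_k\in\mathbb{Z}[x]$ satisfies the Bunyakovsky condition if there is no prime $p$ such that $\prod_i f_i(a)\equiv 0 \pmod p$ for all $a\in\mathbb{F}_p$. The Bateman–Horn Conjecture: if $f_1,\dots,f_k\in\mathbb{Z}[x]$ are distinct irreducible polynomials with positive leading coefficients satisfying the Bunyakovsky condition, then the number of positive integers $m\le x$ for which $f_1(m),\dots,f_k(m)$ are all prime is asymptotic to $C\,\frac{x}{\log^k x}$ for some constant $C>0$ (depending on $f_1,\dots,f_k$). *)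

theory Defs
  imports "HOL-Computational_Algebra.Computational_Algebra" "HOL-Library.Landau_Symbols"
    "HOL-Library.Infinite_Set"
begin

definition setA :: "nat set" where
  "setA = {a. a > 0 \<and> prime (a^2 + 1)}"

text \<open>Enumeration a_1 < a_2 < ... of A (1-indexed).\<close>
definition aseq :: "nat \<Rightarrow> nat" where
  "aseq n = enumerate setA (n - 1)"

definition jfun :: "nat \<Rightarrow> nat option" where
  "jfun n = (if \<exists>i. 1 \<le> i \<and> i \<le> n - 1 \<and> aseq n - aseq (n - i) \<in> setA
             then Some (LEAST i. 1 \<le> i \<and> i \<le> n - 1 \<and> aseq n - aseq (n - i) \<in> setA)
             else None)"

definition bunyakovsky :: "int poly set \<Rightarrow> bool" where
  "bunyakovsky F \<longleftrightarrow> \<not> (\<exists>p::int. prime p \<and> (\<forall>a::int. p dvd (\<Prod>f\<in>F. poly f a)))"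

definition prime_count_family :: "int poly set \<Rightarrow> real \<Rightarrow> nat" where
  "prime_count_family F x = card {m::nat. 0 < m \<and> real m \<le> x \<and> (\<forall>f\<in>F. prime (poly f (int m)))}"

definition bateman_horn :: bool where
  "bateman_horn \<longleftrightarrow>
    (\<forall>F::int poly set. finite F \<and> F \<noteq> {} \<and> (\<forall>f\<in>F. irreducible f \<and> lead_coeff f > 0)
        \<and> bunyakovsky F \<longrightarrow>
      (\<exists>C>0. (\<lambda>x. real (prime_count_family F x)) \<sim>[at_top] (\<lambda>x. C * x / ln x ^ card F)))"

end

theory Submission
  imports Defs
begin

(*
  Fix k > 0. We choose shifts 0 = c_0 < c_1 < ... < c_k such that, among c_1, ..., c_k, only
  c_k lies in A, and such that the polynomials (x - c_i)^2 + 1 satisfy the Bunyakovsky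
  condition. Bateman-Horn counts the m for which all m - c_i lie in A by a multiple of
  x / (ln x)^(k+1), while for each further shift e < c_k those with additionally m - e in A
  are counted by O(x / (ln x)^(k+2)). Hence infinitely many m have m - c_0, ..., m - c_k in A
  and no other element of A between m - c_k and m. For a_n = m these are a_n, ..., a_(n-k),
  so the differences a_n - a_(n-i) are the c_i and j(a_n) = k.
*)

section \<open>The polynomials (x - c)^2 + 1\<close>

definition shifted_sq_plus_one :: "nat \<Rightarrow> int poly" where
  "shifted_sq_plus_one c = [:int c ^ 2 + 1, - 2 * int c, 1:]"

lemma poly_shifted_sq_plus_one: "poly (shifted_sq_plus_one c) x = (x - int c)\<^sup>2 + 1"
  by (simp add: shifted_sq_plus_one_def algebra_simps power2_eq_square)

lemma inj_shifted_sq_plus_one: "inj shifted_sq_plus_one"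
proof (rule injI)
  fix c c' assume "shifted_sq_plus_one c = shifted_sq_plus_one c'"
  then have "coeff (shifted_sq_plus_one c) 1 = coeff (shifted_sq_plus_one c') 1" by simp
  then show "c = c'" by (simp add: shifted_sq_plus_one_def)
qed

lemma irreducible_monic_quadratic_without_roots:
  fixes p :: "int poly"
  assumes deg: "degree p = 2" and monic: "lead_coeff p = 1" and no_root: "\<And>x. poly p x \<noteq> 0"
  shows "irreducible p"
proof (rule irreducibleI)
  show "p \<noteq> 0" using deg by auto
  show "\<not> is_unit p" using deg by (auto simp: is_unit_poly_iff)
  fix a b assume ab: "p = a * b"
  then have "a \<noteq> 0" "b \<noteq> 0" using \<open>p \<noteq> 0\<close> by auto
  then have deg_ab: "degree a + degree b = 2" using ab deg by (metis degree_mult_eq)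
  have "lead_coeff a * lead_coeff b = 1" using ab monic by (metis lead_coeff_mult)
  then have unit_lc: "is_unit (lead_coeff a)" "is_unit (lead_coeff b)"
    by (metis dvd_triv_left dvd_triv_right)+
  consider "degree a = 0 \<or> degree b = 0" | "degree a = 1" using deg_ab by linarith
  then show "is_unit a \<or> is_unit b"
  proof cases
    case 1
    then show ?thesis using unit_lc by (metis degree_0_id is_unit_poly_iff)
  next
    case 2
    then obtain u v where a: "a = [:u, v:]" using degree1_coeffs by metis
    with 2 unit_lc have "\<bar>v\<bar> = 1" by simp
    then have "v * v = 1" by (metis abs_mult_self_eq mult_1)
    then have "poly a (- u * v) = 0" by (simp add: a algebra_simps)
    then have "poly p (- u * v) = 0" by (simp add: ab)
    with no_root show ?thesis by blast
  qed
qed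

lemma irreducible_shifted_sq_plus_one: "irreducible (shifted_sq_plus_one c)"
proof (rule irreducible_monic_quadratic_without_roots)
  show "poly (shifted_sq_plus_one c) x \<noteq> 0" for x
    unfolding poly_shifted_sq_plus_one by (smt (verit) zero_le_power2)
qed (simp_all add: shifted_sq_plus_one_def)

lemma card_roots_mod_prime_shifted_sq_plus_one:
  fixes p :: int
  assumes "prime p"
  shows "card {x \<in> {0..<p}. p dvd poly (shifted_sq_plus_one c) x} \<le> 2" (is "card ?roots \<le> 2")
proof (cases "\<exists>x0\<in>{0..<p}. p dvd poly (shifted_sq_plus_one c) x0")
  case False
  then have "?roots = {}" by blast
  then show ?thesis by (metis card.empty le0)
next
  case True
  then obtain x0 where x0: "x0 \<in> {0..<p}" "p dvd poly (shifted_sq_plus_one c) x0" by blast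
  \<comment> \<open>the roots mod p of a monic quadratic come in pairs with sum 2c\<close>
  have "?roots \<subseteq> {x0, (2 * int c - x0) mod p}"
  proof
    fix x assume x: "x \<in> ?roots"
    have factor: "poly (shifted_sq_plus_one c) x - poly (shifted_sq_plus_one c) x0
        = (x - x0) * (x - (2 * int c - x0))"
      by (simp add: poly_shifted_sq_plus_one algebra_simps power2_eq_square)
    have "p dvd poly (shifted_sq_plus_one c) x - poly (shifted_sq_plus_one c) x0"
      using x x0(2) by (simp add: dvd_diff)
    then have "p dvd (x - x0) * (x - (2 * int c - x0))" by (simp only: factor)
    then have "p dvd x - x0 \<or> p dvd x - (2 * int c - x0)"
      using assms by (simp only: prime_dvd_mult_iff)
    moreover have "x mod p = x" "x0 mod p = x0" using x x0 by auto
    ultimately show "x \<in> {x0, (2 * int c - x0) mod p}"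
      by (metis insertCI mod_eq_dvd_iff)
  qed
  then have "card ?roots \<le> card {x0, (2 * int c - x0) mod p}"
    by (intro card_mono) auto
  also have "\<dots> \<le> 2" by (simp add: card_insert_if)
  finally show ?thesis .
qed

text \<open>A prime p > 2 card T cannot divide all values of the product, as each factor has
  at most two roots mod p.\<close>
lemma bunyakovsky_shifted_sq_plus_one:
  assumes fin: "finite T" and card_T: "2 * card T < B"
    and small_primes: "\<And>c p. c \<in> T \<Longrightarrow> prime p \<Longrightarrow> p \<le> B \<Longrightarrow> \<not> p dvd c\<^sup>2 + 1"
  shows "bunyakovsky (shifted_sq_plus_one ` T)"
  unfolding bunyakovsky_def
proof
  assume "\<exists>p::int. prime p \<and> (\<forall>x. p dvd (\<Prod>f\<in>shifted_sq_plus_one ` T. poly f x))"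
  then obtain p :: int
    where p: "prime p" and dvd_prod: "\<And>x. p dvd (\<Prod>f\<in>shifted_sq_plus_one ` T. poly f x)"
    by blast
  have root: "\<exists>c\<in>T. p dvd poly (shifted_sq_plus_one c) x" for x
    using dvd_prod[of x] p fin by (auto simp: prime_dvd_prod_iff)
  show False
  proof (cases "p \<le> int B")
    case True
    from root[of 0] obtain c where "c \<in> T" "p dvd poly (shifted_sq_plus_one c) 0" by blast
    then have c: "c \<in> T" "p dvd int (c\<^sup>2 + 1)"
      by (simp_all add: poly_shifted_sq_plus_one add.commute)
    have p_nat: "p = int (nat p)" using prime_gt_0_int[OF p] by simp
    have "prime (nat p)" using p by simp
    moreover have "nat p dvd c\<^sup>2 + 1" using c(2) p_nat by (metis int_dvd_int_iff)
    moreover have "nat p \<le> B" using True by linarith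
    ultimately show False using small_primes c(1) by blast
  next
    case False
    have "{0..<p} \<subseteq> (\<Union>c\<in>T. {x \<in> {0..<p}. p dvd poly (shifted_sq_plus_one c) x})"
      using root by auto
    then have "card {0..<p} \<le> card (\<Union>c\<in>T. {x \<in> {0..<p}. p dvd poly (shifted_sq_plus_one c) x})"
      by (intro card_mono finite_UN_I fin ballI
          finite_subset[OF _ finite_atLeastLessThan_int[of 0 p]]) auto
    also have "\<dots> \<le> (\<Sum>c\<in>T. card {x \<in> {0..<p}. p dvd poly (shifted_sq_plus_one c) x})"
      by (rule card_UN_le[OF fin])
    also have "\<dots> \<le> (\<Sum>c\<in>T. 2)"
      by (intro sum_mono card_roots_mod_prime_shifted_sq_plus_one p)
    finally have "nat p \<le> 2 * card T" by simp
    then show False using False card_T by linarith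
  qed
qed

lemma diff_in_setA_iff:
  assumes "c \<le> m"
  shows "m - c \<in> setA \<longleftrightarrow> c < m \<and> prime (poly (shifted_sq_plus_one c) (int m))"
proof -
  have "poly (shifted_sq_plus_one c) (int m) = int ((m - c)\<^sup>2 + 1)"
    using assms by (simp add: poly_shifted_sq_plus_one of_nat_diff)
  then have "prime (poly (shifted_sq_plus_one c) (int m)) \<longleftrightarrow> prime ((m - c)\<^sup>2 + 1)"
    by (simp only: prime_nat_int_transfer)
  then show ?thesis using assms unfolding setA_def by auto
qed

section \<open>Consequences of the Bateman-Horn conjecture\<close>

lemma ln_power_over_x_tendsto_0: "((\<lambda>x::real. ln x ^ K / x) \<longlongrightarrow> 0) at_top"
proof -
  have "((\<lambda>x::real. ln x ^ K / exp (ln x)) \<longlongrightarrow> 0) at_top"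
    using filterlim_compose[OF tendsto_power_div_exp_0[of K] ln_at_top] by simp
  moreover have "eventually (\<lambda>x::real. ln x ^ K / exp (ln x) = ln x ^ K / x) at_top"
    using eventually_gt_at_top[of "0::real"] by eventually_elim simp
  ultimately show ?thesis by (rule Lim_transform_eventually)
qed

lemma eventually_x_over_ln_power_nonzero:
  "C \<noteq> 0 \<Longrightarrow> eventually (\<lambda>x::real. C * x / ln x ^ K \<noteq> 0) at_top"
  using eventually_gt_at_top[of "1::real"] by eventually_elim auto

lemma bounded_in_smallo_x_over_ln_power:
  fixes g :: "real \<Rightarrow> real"
  assumes bound: "\<And>x. \<bar>g x\<bar> \<le> M" and C: "C \<noteq> 0"
  shows "g \<in> o(\<lambda>x. C * x / ln x ^ K)"
proof -
  have "g \<in> O(\<lambda>_. 1)" using bound by (intro bigoI[where c = M]) auto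
  moreover have "(\<lambda>_. 1) \<in> o(\<lambda>x::real. C * x / ln x ^ K)"
  proof (rule smalloI_tendsto)
    have "((\<lambda>x::real. (1 / C) * (ln x ^ K / x)) \<longlongrightarrow> 0) at_top"
      using tendsto_mult_right_zero[OF ln_power_over_x_tendsto_0] .
    moreover have "eventually (\<lambda>x. (1 / C) * (ln x ^ K / x) = 1 / (C * x / ln x ^ K)) at_top"
      using eventually_gt_at_top[of "1::real"] by eventually_elim (auto simp: field_simps)
    ultimately show "((\<lambda>x. 1 / (C * x / ln x ^ K)) \<longlongrightarrow> 0) at_top"
      by (rule Lim_transform_eventually)
  qed (rule eventually_x_over_ln_power_nonzero[OF C])
  ultimately show ?thesis by (rule landau_o.big_small_trans)
qed

lemma x_over_ln_Suc_power_in_smallo: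
  assumes "C \<noteq> 0"
  shows "(\<lambda>x::real. C' * x / ln x ^ Suc K) \<in> o(\<lambda>x. C * x / ln x ^ K)"
proof (rule smalloI_tendsto)
  have "((\<lambda>x::real. (C' / C) * inverse (ln x)) \<longlongrightarrow> 0) at_top"
    using tendsto_mult_right_zero[OF tendsto_inverse_0_at_top[OF ln_at_top]] .
  moreover have "eventually (\<lambda>x. (C' / C) * inverse (ln x)
      = (C' * x / ln x ^ Suc K) / (C * x / ln x ^ K)) at_top"
    using eventually_gt_at_top[of "1::real"] by eventually_elim (auto simp: field_simps)
  ultimately show "((\<lambda>x. (C' * x / ln x ^ Suc K) / (C * x / ln x ^ K)) \<longlongrightarrow> 0) at_top"
    by (rule Lim_transform_eventually)
qed (rule eventually_x_over_ln_power_nonzero[OF assms])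

lemma asymp_equiv_not_smallo:
  fixes f g :: "real \<Rightarrow> real"
  assumes "f \<sim>[at_top] g" and "eventually (\<lambda>x. g x \<noteq> 0) at_top"
  shows "f \<notin> o(g)"
proof
  assume "f \<in> o(g)"
  moreover have "g \<in> O(f)" using asymp_equiv_imp_bigo[OF asymp_equiv_symI[OF assms(1)]] .
  ultimately have "g \<in> o(g)" using landau_o.big_small_trans by blast
  then have "eventually (\<lambda>x. g x = 0) at_top" by (simp add: landau_o.small_refl_iff)
  with assms(2) have "eventually (\<lambda>x. g x \<noteq> 0 \<and> g x = 0) at_top" by (rule eventually_conj)
  then show False by simp
qed

lemma bateman_horn_shifted_sq_plus_one:
  assumes "bateman_horn" "finite U" "U \<noteq> {}" "bunyakovsky (shifted_sq_plus_one ` U)"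
  obtains C where "C > 0" "(\<lambda>x. real (prime_count_family (shifted_sq_plus_one ` U) x))
    \<sim>[at_top] (\<lambda>x. C * x / ln x ^ card U)"
proof -
  have "lead_coeff (shifted_sq_plus_one c) = 1" for c
    by (simp add: shifted_sq_plus_one_def)
  then have "\<forall>f\<in>shifted_sq_plus_one ` U. irreducible f \<and> lead_coeff f > 0"
    using irreducible_shifted_sq_plus_one by auto
  moreover have "card (shifted_sq_plus_one ` U) = card U"
    using inj_shifted_sq_plus_one by (simp add: card_image inj_on_subset)
  ultimately have "\<exists>C>0. (\<lambda>x. real (prime_count_family (shifted_sq_plus_one ` U) x))
      \<sim>[at_top] (\<lambda>x. C * x / ln x ^ card U)"
    using assms unfolding bateman_horn_def by auto
  then show ?thesis using that by blast
qed

lemma prime_count_family_le_card: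
  assumes "finite S" and "\<And>m. 0 < m \<Longrightarrow> \<forall>f\<in>F. prime (poly f (int m)) \<Longrightarrow> m \<in> S"
  shows "prime_count_family F x \<le> card S"
  unfolding prime_count_family_def by (rule card_mono) (use assms in auto)

text \<open>A common prime divisor p of all values forces p itself to be one of the primes
  (m - c)^2 + 1, which bounds m.\<close>
lemma prime_count_family_bounded_if_not_bunyakovsky:
  assumes fin: "finite U" and not_buny: "\<not> bunyakovsky (shifted_sq_plus_one ` U)"
  obtains M where "\<And>x. prime_count_family (shifted_sq_plus_one ` U) x \<le> M"
proof -
  obtain p :: int where p: "prime p"
    and dvd_prod: "\<And>x. p dvd (\<Prod>f\<in>shifted_sq_plus_one ` U. poly f x)"
    using not_buny unfolding bunyakovsky_def by blast
  have "m \<in> {..Max U + nat p}" if m: "\<forall>f\<in>shifted_sq_plus_one ` U. prime (poly f (int m))" for m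
  proof -
    from dvd_prod[of "int m"] p fin obtain c
      where c: "c \<in> U" "p dvd poly (shifted_sq_plus_one c) (int m)"
      by (auto simp: prime_dvd_prod_iff)
    then have "p = poly (shifted_sq_plus_one c) (int m)" using m p by (intro primes_dvd_imp_eq) auto
    then have p_eq: "p = (int m - int c)\<^sup>2 + 1" by (simp add: poly_shifted_sq_plus_one)
    have "int m - int c \<le> (int m - int c)\<^sup>2"
      by (cases "int m - int c \<le> 0") (auto simp: power2_eq_square mult_le_cancel_left1)
    moreover have "c \<le> Max U" using c fin by simp
    ultimately show ?thesis using p_eq by simp
  qed
  then have "prime_count_family (shifted_sq_plus_one ` U) x \<le> card {..Max U + nat p}" for x
    by (intro prime_count_family_le_card) auto
  then show ?thesis using that by blast
qed

lemma prime_count_insert_in_smallo: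
  assumes bh: "bateman_horn" and fin: "finite T" and e: "e \<notin> T" and C: "C \<noteq> 0"
  shows "(\<lambda>x. real (prime_count_family (shifted_sq_plus_one ` insert e T) x))
    \<in> o(\<lambda>x. C * x / ln x ^ card T)"
proof (cases "bunyakovsky (shifted_sq_plus_one ` insert e T)")
  case True
  then obtain C' where "(\<lambda>x. real (prime_count_family (shifted_sq_plus_one ` insert e T) x))
      \<sim>[at_top] (\<lambda>x. C' * x / ln x ^ card (insert e T))"
    using bateman_horn_shifted_sq_plus_one[OF bh] fin by blast
  then have "(\<lambda>x. real (prime_count_family (shifted_sq_plus_one ` insert e T) x))
      \<in> O(\<lambda>x. C' * x / ln x ^ Suc (card T))"
    using fin e by (simp add: asymp_equiv_imp_bigo)
  then show ?thesis using x_over_ln_Suc_power_in_smallo[OF C] by (rule landau_o.big_small_trans)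
next
  case False
  then obtain M where M: "\<And>x. prime_count_family (shifted_sq_plus_one ` insert e T) x \<le> M"
    using prime_count_family_bounded_if_not_bunyakovsky fin by blast
  have "\<bar>real (prime_count_family (shifted_sq_plus_one ` insert e T) x)\<bar> \<le> real M" for x
    using M[of x] by simp
  then show ?thesis by (rule bounded_in_smallo_x_over_ln_power[OF _ C])
qed

lemma prime_count_le_card_plus_sum_insert:
  fixes T E :: "nat set"
  defines "G \<equiv> {m. (\<forall>c\<in>T. prime (poly (shifted_sq_plus_one c) (int m)))
    \<and> (\<forall>e\<in>E. \<not> prime (poly (shifted_sq_plus_one e) (int m)))}"
  assumes fin_G: "finite G" and fin_E: "finite E"
  shows "prime_count_family (shifted_sq_plus_one ` T) x
    \<le> card G + (\<Sum>e\<in>E. prime_count_family (shifted_sq_plus_one ` insert e T) x)"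
proof -
  define Q where "Q e = {m::nat. 0 < m \<and> real m \<le> x
    \<and> (\<forall>f\<in>shifted_sq_plus_one ` insert e T. prime (poly f (int m)))}" for e
  have fin_Q: "finite (Q e)" for e
    unfolding Q_def by (rule finite_subset[of _ "{..nat \<lfloor>x\<rfloor>}"]) (auto simp: le_nat_floor)
  have "{m::nat. 0 < m \<and> real m \<le> x \<and> (\<forall>f\<in>shifted_sq_plus_one ` T. prime (poly f (int m)))}
      \<subseteq> G \<union> (\<Union>e\<in>E. Q e)"
    unfolding G_def Q_def by auto
  then have "prime_count_family (shifted_sq_plus_one ` T) x \<le> card (G \<union> (\<Union>e\<in>E. Q e))"
    unfolding prime_count_family_def using fin_G fin_E fin_Q by (intro card_mono) auto
  also have "\<dots> \<le> card G + (\<Sum>e\<in>E. card (Q e))"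
    using card_Un_le[of G "\<Union>e\<in>E. Q e"] card_UN_le[OF fin_E, of Q] by linarith
  finally show ?thesis unfolding Q_def prime_count_family_def .
qed

lemma infinite_prime_pattern:
  fixes T E :: "nat set"
  assumes bh: "bateman_horn" and fin_T: "finite T" and "T \<noteq> {}"
    and buny: "bunyakovsky (shifted_sq_plus_one ` T)"
    and fin_E: "finite E" and disj: "E \<inter> T = {}"
  shows "infinite {m. (\<forall>c\<in>T. prime (poly (shifted_sq_plus_one c) (int m)))
    \<and> (\<forall>e\<in>E. \<not> prime (poly (shifted_sq_plus_one e) (int m)))}" (is "infinite ?G")
proof
  assume fin_G: "finite ?G"
  obtain C where "C > 0" and asymp: "(\<lambda>x. real (prime_count_family (shifted_sq_plus_one ` T) x))
      \<sim>[at_top] (\<lambda>x. C * x / ln x ^ card T)"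
    using bateman_horn_shifted_sq_plus_one[OF bh fin_T \<open>T \<noteq> {}\<close> buny] by blast
  then have C: "C \<noteq> 0" by simp
  define R where "R x = real (card ?G)
    + (\<Sum>e\<in>E. real (prime_count_family (shifted_sq_plus_one ` insert e T) x))" for x
  have "(\<lambda>x. real (prime_count_family (shifted_sq_plus_one ` T) x)) \<in> O(R)"
  proof (intro bigoI[where c = 1] always_eventually allI)
    fix x
    have "prime_count_family (shifted_sq_plus_one ` T) x
        \<le> card ?G + (\<Sum>e\<in>E. prime_count_family (shifted_sq_plus_one ` insert e T) x)"
      using fin_G fin_E by (rule prime_count_le_card_plus_sum_insert)
    then have "real (prime_count_family (shifted_sq_plus_one ` T) x) \<le> R x"
      unfolding R_def of_nat_le_iff[symmetric, where 'a = real]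
      by (simp only: of_nat_add of_nat_sum)
    moreover have "0 \<le> R x" unfolding R_def by (intro add_nonneg_nonneg sum_nonneg) auto
    ultimately show "norm (real (prime_count_family (shifted_sq_plus_one ` T) x)) \<le> 1 * norm (R x)"
      by simp
  qed
  also have "R \<in> o(\<lambda>x. C * x / ln x ^ card T)"
    unfolding R_def
  proof (rule sum_in_smallo(1))
    show "(\<lambda>x::real. real (card ?G)) \<in> o(\<lambda>x. C * x / ln x ^ card T)"
      by (rule bounded_in_smallo_x_over_ln_power[OF _ C]) (rule order.refl)
    show "(\<lambda>x. \<Sum>e\<in>E. real (prime_count_family (shifted_sq_plus_one ` insert e T) x))
        \<in> o(\<lambda>x. C * x / ln x ^ card T)"
      using disj by (intro big_sum_in_smallo prime_count_insert_in_smallo[OF bh fin_T _ C]) auto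
  qed
  finally show False
    using asymp_equiv_not_smallo[OF asymp eventually_x_over_ln_power_nonzero[OF C]] by blast
qed

lemma infinite_setA:
  assumes "bateman_horn"
  shows "infinite setA"
proof -
  have "bunyakovsky (shifted_sq_plus_one ` {0})"
    by (rule bunyakovsky_shifted_sq_plus_one[where B = 3]) (auto simp: not_prime_unit)
  then have "infinite {m. prime (poly (shifted_sq_plus_one 0) (int m))}"
    using infinite_prime_pattern[OF assms, of "{0}" "{}"] by simp
  moreover have "{m. prime (poly (shifted_sq_plus_one 0) (int m))} \<subseteq> setA"
  proof
    fix m assume m: "m \<in> {m. prime (poly (shifted_sq_plus_one 0) (int m))}"
    have "m \<noteq> 0"
    proof
      assume "m = 0"
      with m show False by (simp add: poly_shifted_sq_plus_one)
    qed
    then show "m \<in> setA" using diff_in_setA_iff[of 0 m] m by simp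
  qed
  ultimately show ?thesis using finite_subset by blast
qed

section \<open>Consecutive elements of A\<close>

lemma enumerate_Suc_eqI:
  fixes S :: "'a::wellorder set"
  assumes "infinite S" and "x \<in> S" and "enumerate S n < x"
    and "\<And>z. z \<in> S \<Longrightarrow> enumerate S n < z \<Longrightarrow> x \<le> z"
  shows "enumerate S (Suc n) = x"
  unfolding enumerate_Suc''[OF assms(1)] by (rule Least_equality) (use assms in auto)

lemma enumerate_pred_eqI:
  fixes S :: "nat set"
  assumes inf: "infinite S" and x: "enumerate S r = x" and "y \<in> S" "y < x"
    and gap: "\<And>z. z \<in> S \<Longrightarrow> y < z \<Longrightarrow> z < x \<Longrightarrow> False"
  shows "0 < r \<and> enumerate S (r - 1) = y"
proof -
  obtain s where s: "enumerate S s = y" using enumerate_Ex[OF inf \<open>y \<in> S\<close>] by blast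
  have "enumerate S (Suc s) = x"
    using assms enumerate_in_set[OF inf, of r] s
    by (intro enumerate_Suc_eqI) (auto simp: not_less[symmetric])
  then have "r = Suc s" using x inj_enumerate[OF inf] by (auto dest: injD)
  with s show ?thesis by simp
qed

lemma enumerate_consecutive_shifts:
  fixes S :: "nat set" and c :: "nat \<Rightarrow> nat"
  assumes inf: "infinite S" and r: "enumerate S r = m"
    and c0: "c 0 = 0" and mono: "strict_mono_on {0..k} c" and ck: "c k \<le> m"
    and in_S: "\<And>i. i \<le> k \<Longrightarrow> m - c i \<in> S"
    and gaps: "\<And>e. e < c k \<Longrightarrow> e \<notin> c ` {0..k} \<Longrightarrow> m - e \<notin> S"
  shows "i \<le> k \<Longrightarrow> i \<le> r \<and> enumerate S (r - i) = m - c i"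
proof (induction i)
  case 0
  then show ?case using r c0 by simp
next
  case (Suc i)
  then have IH: "i \<le> r" "enumerate S (r - i) = m - c i" by auto
  have lt: "c i < c (Suc i)" using Suc.prems by (intro strict_mono_onD[OF mono]) auto
  have le_ck: "c (Suc i) \<le> c k" using Suc.prems by (intro strict_mono_on_leD[OF mono]) auto
  have "0 < r - i \<and> enumerate S (r - i - 1) = m - c (Suc i)"
  proof (rule enumerate_pred_eqI[OF inf IH(2) in_S[OF Suc.prems]])
    show "m - c (Suc i) < m - c i" using lt le_ck ck by simp
    fix z assume z: "z \<in> S" "m - c (Suc i) < z" "z < m - c i"
    then have e: "c i < m - z" "m - z < c (Suc i)" "z = m - (m - z)" using le_ck ck by auto
    have "m - z \<notin> c ` {0..k}"
    proof
      assume "m - z \<in> c ` {0..k}"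
      then obtain j where "j \<le> k" "m - z = c j" by auto
      with e(1,2) Suc.prems have "i < j" "j < Suc i"
        using strict_mono_on_less[OF mono] by auto
      then show False by simp
    qed
    moreover have "m - z < c k" using e(2) le_ck by simp
    ultimately show False using gaps z(1) e(3) by metis
  qed
  then show ?case using IH by (simp add: diff_diff_add)
qed

lemma jfun_eq_SomeI:
  assumes "1 \<le> k" "k < n" "aseq n - aseq (n - k) \<in> setA"
    and "\<And>i. 1 \<le> i \<Longrightarrow> i < k \<Longrightarrow> aseq n - aseq (n - i) \<notin> setA"
  shows "jfun n = Some k"
proof -
  have "(LEAST i. 1 \<le> i \<and> i \<le> n - 1 \<and> aseq n - aseq (n - i) \<in> setA) = k"
    by (rule Least_equality) (use assms in \<open>auto simp: not_less[symmetric]\<close>)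
  moreover have "\<exists>i. 1 \<le> i \<and> i \<le> n - 1 \<and> aseq n - aseq (n - i) \<in> setA"
    using assms by auto
  ultimately show ?thesis unfolding jfun_def by simp
qed

text \<open>The differences a_n - a_(n-i), i = 0, ..., k, that force j(a_n) = k.\<close>
definition gap_pattern :: "nat \<Rightarrow> (nat \<Rightarrow> nat) \<Rightarrow> bool" where
  "gap_pattern k c \<longleftrightarrow> c 0 = 0 \<and> strict_mono_on {0..k} c \<and> (\<forall>i\<in>{1..k}. c i \<in> setA \<longleftrightarrow> i = k)
    \<and> bunyakovsky (shifted_sq_plus_one ` c ` {0..k})"

text \<open>With R = N^2 + 1, the number N * (1 + R * i) is congruent to N mod R, so R is a proper
  divisor of its square plus one.\<close>
lemma composite_shift_not_in_setA:
  assumes "0 < N" "0 < i"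
  shows "N * (1 + (N\<^sup>2 + 1) * i) \<notin> setA"
proof -
  have factor: "(N * (1 + (N\<^sup>2 + 1) * i))\<^sup>2 + 1 = (N\<^sup>2 + 1) * (1 + N\<^sup>2 * i * (2 + (N\<^sup>2 + 1) * i))"
    by (simp add: algebra_simps power2_eq_square)
  have "2 \<le> N\<^sup>2 + 1" "2 \<le> 1 + N\<^sup>2 * i * (2 + (N\<^sup>2 + 1) * i)"
    using assms by (simp_all add: Suc_le_eq)
  then have "\<not> prime ((N * (1 + (N\<^sup>2 + 1) * i))\<^sup>2 + 1)"
    unfolding factor by (metis prime_product Suc_1 not_less_eq_eq order_refl)
  then show ?thesis unfolding setA_def by simp
qed

lemma prime_dvd_imp_not_dvd_sq_plus_one:
  fixes p c :: nat
  assumes "prime p" "p dvd c"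
  shows "\<not> p dvd c\<^sup>2 + 1"
proof
  assume "p dvd c\<^sup>2 + 1"
  moreover have "p dvd c\<^sup>2" using assms(2) by (simp add: power2_eq_square)
  ultimately have "p dvd 1" by (metis dvd_add_right_iff)
  with assms(1) show False by (simp add: not_prime_unit)
qed

text \<open>N = (2k+3)! divides c i for i < k, so no prime up to 2k+3 divides c i ^ 2 + 1;
  c k is a large element of A.\<close>
lemma gap_pattern_exists:
  assumes inf: "infinite setA" and "0 < k"
  obtains c where "gap_pattern k c"
proof -
  define B where "B = 2 * k + 3"
  define N :: nat where "N = fact B"
  define d where "d i = N * (1 + (N\<^sup>2 + 1) * i)" for i
  have N: "0 < N" "B \<le> N" unfolding N_def by (simp_all add: fact_ge_self)
  then have d_less: "d i < d j" if "i < j" for i j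
    unfolding d_def using that by (intro mult_strict_left_mono add_strict_left_mono) auto
  have N_le_d: "N \<le> d i" for i unfolding d_def by simp
  obtain D where D: "D \<in> setA" "d (k - 1) < D"
    using inf unfolding infinite_nat_iff_unbounded by blast
  define c where "c i = (if i = 0 then 0 else if i < k then d i else D)" for i
  have "strict_mono_on {0..k} c"
  proof (rule strict_mono_onI)
    fix i j assume "i \<in> {0..k}" "j \<in> {0..k}" "i < j"
    moreover have "d i \<le> d (k - 1)" if "i < k" for i
      unfolding d_def using that by (intro mult_left_mono add_left_mono) auto
    ultimately show "c i < c j"
      using D(2) N(1) N_le_d[of j] d_less[of i j] unfolding c_def by (auto intro: le_less_trans)
  qed
  moreover have "\<forall>i\<in>{1..k}. c i \<in> setA \<longleftrightarrow> i = k"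
    using D(1) N(1) composite_shift_not_in_setA unfolding c_def d_def by auto
  moreover have "bunyakovsky (shifted_sq_plus_one ` c ` {0..k})"
  proof (rule bunyakovsky_shifted_sq_plus_one)
    have "card (c ` {0..k}) \<le> k + 1" using card_image_le[of "{0..k}" c] by simp
    then show "2 * card (c ` {0..k}) < B" unfolding B_def by simp
    fix t p assume t: "t \<in> c ` {0..k}" and p: "prime p" "p \<le> B"
    show "\<not> p dvd t\<^sup>2 + 1"
    proof (cases "t = D")
      case True
      have "B < D" using D(2) N(2) N_le_d[of "k - 1"] by linarith
      then have "B < D\<^sup>2 + 1" using le_square[of D] unfolding power2_eq_square by linarith
      then have "p \<noteq> D\<^sup>2 + 1" using p by simp
      with D(1) p show ?thesis unfolding True setA_def by (auto dest: primes_dvd_imp_eq)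
    next
      case False
      then have "N dvd t" using t unfolding c_def d_def by auto
      moreover have "p dvd N"
        unfolding N_def using p prime_gt_0_nat[of p] by (intro dvd_fact) auto
      ultimately show ?thesis using p(1) by (intro prime_dvd_imp_not_dvd_sq_plus_one) auto
    qed
  qed (simp add: B_def)
  moreover have "c 0 = 0" unfolding c_def by simp
  ultimately have "gap_pattern k c" unfolding gap_pattern_def by blast
  then show ?thesis by (rule that)
qed

lemma jfun_eq_Some_at_gap_pattern:
  assumes inf: "infinite setA" and c: "gap_pattern k c" and "0 < k" and "c k < m"
    and pattern: "\<And>i. i \<le> k \<Longrightarrow> prime (poly (shifted_sq_plus_one (c i)) (int m))"
    and gaps: "\<And>e. e < c k \<Longrightarrow> e \<notin> c ` {0..k} \<Longrightarrow> \<not> prime (poly (shifted_sq_plus_one e) (int m))"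
  obtains n where "k < n" "aseq n = m" "jfun n = Some k"
proof -
  have c0: "c 0 = 0" and mono: "strict_mono_on {0..k} c"
    and c_in_setA: "\<And>i. 1 \<le> i \<Longrightarrow> i \<le> k \<Longrightarrow> c i \<in> setA \<longleftrightarrow> i = k"
    using c unfolding gap_pattern_def by auto
  have c_le: "c i \<le> c k" if "i \<le> k" for i using that by (intro strict_mono_on_leD[OF mono]) auto
  have in_setA: "m - c i \<in> setA" if "i \<le> k" for i
  proof -
    have "c i < m" using c_le[OF that] \<open>c k < m\<close> by simp
    then show ?thesis using diff_in_setA_iff[OF less_imp_le] pattern[OF that] by blast
  qed
  have not_in_setA: "m - e \<notin> setA" if "e < c k" "e \<notin> c ` {0..k}" for e
  proof -
    have "e \<le> m" using that(1) \<open>c k < m\<close> by simp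
    then show ?thesis using diff_in_setA_iff[of e m] gaps[OF that] by blast
  qed
  have "m - c 0 \<in> setA" by (rule in_setA) simp
  then have "m \<in> setA" by (simp add: c0)
  then obtain r where r: "enumerate setA r = m" by (rule enumerate_Ex[OF inf, THEN exE])
  have consecutive: "i \<le> r \<and> enumerate setA (r - i) = m - c i" if "i \<le> k" for i
    using \<open>c k < m\<close>
    by (intro enumerate_consecutive_shifts[OF inf r c0 mono _ in_setA not_in_setA that]) simp
  have diff: "aseq (Suc r) - aseq (Suc r - i) = c i" if "1 \<le> i" "i \<le> k" for i
    using consecutive[OF that(2)] r that c_le[OF that(2)] \<open>c k < m\<close> unfolding aseq_def by simp
  have "jfun (Suc r) = Some k"
    using \<open>0 < k\<close> consecutive[of k] diff c_in_setA by (intro jfun_eq_SomeI) auto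
  moreover have "aseq (Suc r) = m" using r unfolding aseq_def by simp
  moreover have "k < Suc r" using consecutive[of k] by simp
  ultimately show ?thesis using that by blast
qed

theorem proposition2:
  assumes "bateman_horn"
  shows "\<forall>k::nat. k > 0 \<longrightarrow> infinite {n::nat. n \<ge> 2 \<and> (\<exists>i. jfun n = Some i \<and> i \<ge> k)}"
proof (intro allI impI)
  fix k :: nat assume "k > 0"
  have inf: "infinite setA" using assms by (rule infinite_setA)
  then obtain c where c: "gap_pattern k c" using gap_pattern_exists \<open>k > 0\<close> by blast
  define G where "G = {m. (\<forall>t\<in>c ` {0..k}. prime (poly (shifted_sq_plus_one t) (int m)))
    \<and> (\<forall>e\<in>{..<c k} - c ` {0..k}. \<not> prime (poly (shifted_sq_plus_one e) (int m)))}"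
  have "infinite G"
    unfolding G_def using c by (intro infinite_prime_pattern[OF assms]) (auto simp: gap_pattern_def)
  then have "infinite (G - {..c k})" by simp
  moreover have "G - {..c k} \<subseteq> aseq ` {n. n \<ge> 2 \<and> (\<exists>i. jfun n = Some i \<and> i \<ge> k)}"
  proof
    fix m assume "m \<in> G - {..c k}"
    then obtain n where "k < n" "aseq n = m" "jfun n = Some k"
      using jfun_eq_Some_at_gap_pattern[OF inf c \<open>k > 0\<close>, of m] unfolding G_def by auto
    then show "m \<in> aseq ` {n. n \<ge> 2 \<and> (\<exists>i. jfun n = Some i \<and> i \<ge> k)}"
      using \<open>k > 0\<close> by force
  qed
  ultimately show "infinite {n::nat. n \<ge> 2 \<and> (\<exists>i. jfun n = Some i \<and> i \<ge> k)}"
    using finite_surj by blast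
qed

end
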